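(* Let $n\ge 2$ and $$\mathcal M=\{S+L:\ S\in\mathcal S_{\neq},\ L\in l(S)\}\subseteq M(n,\mathbb R).$$ Then (i) $\mathcal M$ is an open, dense subset of $M(n,\mathbb R)$; consequently $M(n,\mathbb R)\setminus\mathcal M$ is meager and $\mathcal M$ is an $n^2$-dimensional $C^\infty$ manifold in $\mathbb R^{n^2}\cong M(n,\mathbb R)$; (ii) for every $M\in\mathcal M$, setting $\Pi_x=x^{-M}x^{-M^*}$ for $x>0$, one has $\bigcap_{x>0}G(\Pi_x)=\{I,-I\}$.
   Context: $\mathcal S(n,\mathbb R)$ denotes the real symmetric $n\times n$ matrices and $\mathcal S_{\neq}$ those whose $n$ eigenvalues are pairwise distinct; $so(n)$ denotes the real skew-symmetric matrices, so every $M\in M(n,\mathbb R)$ decomposes uniquely as $M=S+L$ with $S=(M+M^* )/2$, $L=(M-M^* )/2$. For an orthonormal basis $o_1,\dots,o_n$ of $\mathbb R^n$, $\mathcal L_{\mathrm{invar}}(o_1,\dots,o_n)$ is the set of $L\in so(n)$ for which some subset $\{o_{j_1},\dots,o_{j_k}\}$, $1\le k<n$, spans an invariant subspace of $L$. For $S\in\mathcal S_{\neq}$, $l(S)=so(n)\setminus\mathcal L_{\mathrm{invar}}(o_1,\dots,o_n)$ where $o_1,\dots,o_n$ is an orthonormal eigenbasis of $S$. $x^{-M}=\exp(-M\log x)$, and $G(\Pi)=\{O\in O(n):O\Pi=\Pi O\}$. *)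

theory Defs
  imports "HOL-Analysis.Analysis"
begin

fun mat_pow :: "real^'n^'n \<Rightarrow> nat \<Rightarrow> real^'n^'n" where
  "mat_pow A 0 = mat 1"
| "mat_pow A (Suc k) = A ** mat_pow A k"

definition mat_exp :: "real^'n^'n \<Rightarrow> real^'n^'n" where
  "mat_exp A = (\<Sum>k. (1 / fact k) *\<^sub>R mat_pow A k)"

text \<open>x^(-M) = exp(-M log x).\<close>
definition mat_rpow_neg :: "real \<Rightarrow> real^'n^'n \<Rightarrow> real^'n^'n" where
  "mat_rpow_neg x M = mat_exp (- (ln x *\<^sub>R M))"

definition symmetric_mat :: "real^'n^'n \<Rightarrow> bool" where
  "symmetric_mat S \<longleftrightarrow> transpose S = S"

definition skew_mat :: "real^'n^'n \<Rightarrow> bool" where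
  "skew_mat L \<longleftrightarrow> transpose L = - L"

definition eigenvalues :: "real^'n^'n \<Rightarrow> real set" where
  "eigenvalues A = {c. \<exists>v. v \<noteq> 0 \<and> A *v v = c *\<^sub>R v}"

definition S_neq :: "(real^'n^'n) set" where
  "S_neq = {S. symmetric_mat S \<and> card (eigenvalues S) = CARD('n)}"

definition orthonormal_basis :: "('n \<Rightarrow> real^'n) \<Rightarrow> bool" where
  "orthonormal_basis b \<longleftrightarrow> (\<forall>i j. b i \<bullet> b j = (if i = j then 1 else 0))"

definition eigenbasis :: "real^'n^'n \<Rightarrow> ('n \<Rightarrow> real^'n) \<Rightarrow> bool" where
  "eigenbasis S b \<longleftrightarrow> orthonormal_basis b \<and> (\<forall>i. \<exists>c. S *v b i = c *\<^sub>R b i)"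

definition L_invar :: "('n \<Rightarrow> real^'n) \<Rightarrow> (real^'n^'n) set" where
  "L_invar b = {L. skew_mat L \<and>
     (\<exists>J. J \<noteq> {} \<and> J \<noteq> UNIV \<and> (\<forall>x \<in> span (b ` J). L *v x \<in> span (b ` J)))}"

text \<open>l(S) = so(n) minus L_invar(b) for an orthonormal eigenbasis b of S.
  (For S in S_neq the eigenbasis is unique up to signs/order, so the choice is irrelevant.)\<close>
definition l_set :: "real^'n^'n \<Rightarrow> (real^'n^'n) set" where
  "l_set S = {L. skew_mat L \<and> L \<notin> L_invar (SOME b. eigenbasis S b)}"

definition M_set :: "(real^'n^'n) set" where
  "M_set = {S + L | S L. S \<in> S_neq \<and> L \<in> l_set S}"

definition G_set :: "real^'n^'n \<Rightarrow> (real^'n^'n) set" where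
  "G_set P = {Q. orthogonal_matrix Q \<and> Q ** P = P ** Q}"

definition meager :: "'a::topological_space set \<Rightarrow> bool" where
  "meager A \<longleftrightarrow> (\<exists>F :: nat \<Rightarrow> 'a set. (\<forall>k. interior (closure (F k)) = {}) \<and> A \<subseteq> (\<Union>k. F k))"

end

theory Submission
  imports Defs
begin

(* Write X = S + L with S = (X + X^T)/2 symmetric and L = (X - X^T)/2 skew.  After proving the
   spectral theorem for real symmetric matrices (variationally, via maxima of the Rayleigh
   quotient), everything is expressed in an orthonormal eigenbasis B of S, encoded as an
   orthogonal matrix whose rows are eigenvectors.  Since for simple spectrum the eigenbasis is
   unique up to order and signs, X lies in M_set iff the eigenvalues are distinct and the matrix
   coefficients B_j . L B_i vanish across no partition of the indices ("coord_invariant").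

   (i) Openness: the complement of M_set is the projection, along the compact group of orthogonal
   matrices, of a closed set of degenerate pairs (B, X).  Density: moving X along the line
   X + tE for a test matrix E that is diagonal with simple spectrum (symmetric part) and has
   nowhere vanishing off-diagonal coefficients (skew part) in the basis B leaves M_set only for
   finitely many t.  An open dense set has a nowhere dense, hence meager, complement.

   (ii) With x = exp(-s), Pi_x = exp(sM) exp(sM^T) is an entire matrix power series in s; a
   matrix commuting with all its values commutes with the coefficients M + M^T and
   (M^2 + M^T^2)/2 + M M^T, hence with S and [M, M^T].  Such an orthogonal Q is diagonal in B,
   and the coefficients of [M, M^T] in B are 2 (lam_i - lam_j) L_ji; since L leaves no coordinate
   subspace invariant, all diagonal entries of Q agree, i.e. Q = +I or -I. *)

lemma continuous_on_matrix_mult[continuous_intros]: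
  fixes f g :: "'a::topological_space \<Rightarrow> real^'n^'n"
  assumes "continuous_on U f" "continuous_on U g"
  shows "continuous_on U (\<lambda>x. f x ** g x)"
  unfolding matrix_matrix_mult_def by (intro continuous_intros assms)

lemma continuous_on_matrix_vector_mult[continuous_intros]:
  fixes f :: "'a::topological_space \<Rightarrow> real^'n^'n" and g :: "'a \<Rightarrow> real^'n"
  assumes "continuous_on U f" "continuous_on U g"
  shows "continuous_on U (\<lambda>x. f x *v g x)"
  unfolding matrix_vector_mult_def by (intro continuous_intros assms)

lemma continuous_on_transpose[continuous_intros]:
  fixes f :: "'a::topological_space \<Rightarrow> real^'n^'n"
  assumes "continuous_on U f"
  shows "continuous_on U (\<lambda>x. transpose (f x))"
  unfolding transpose_def by (intro continuous_intros assms)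

lemma transpose_add: "transpose (A + B) = transpose A + transpose (B::real^'n^'n)"
  by (simp add: transpose_def vec_eq_iff)

lemma inner_transpose: "x \<bullet> (transpose A *v y) = y \<bullet> (A *v (x::real^'n))"
proof -
  have "x \<bullet> (transpose A *v y) = (y v* A) \<bullet> x" by (simp add: inner_commute)
  also have "\<dots> = y \<bullet> (A *v x)" by (rule dot_lmul_matrix)
  finally show ?thesis .
qed

lemma inner_adjoint: "x \<bullet> (A *v y) = (transpose A *v x) \<bullet> (y::real^'n)"
  using inner_transpose[of x "transpose A" y] by (simp add: inner_commute del: transpose_matrix_vector)

lemma matrix_vector_mult_sum_right: "A *v (\<Sum>k\<in>K. f k) = (\<Sum>k\<in>K. A *v f k :: real^'n)"
  by (induction K rule: infinite_finite_induct) (auto simp: matrix_vector_right_distrib)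

lemma matrix_add_rdistrib: "(A + B) ** C = A ** C + B ** (C::real^'n^'n)"
  by (simp add: vec_eq_iff matrix_matrix_mult_def distrib_right sum.distrib)

lemma matrix_diff_ldistrib: "C ** (A - B) = C ** A - C ** (B::real^'n^'n)"
  by (simp add: vec_eq_iff matrix_matrix_mult_def right_diff_distrib sum_subtractf)

lemma matrix_diff_rdistrib: "(A - B) ** C = A ** C - B ** (C::real^'n^'n)"
  by (simp add: vec_eq_iff matrix_matrix_mult_def left_diff_distrib sum_subtractf)

section \<open>Symmetric matrices: the spectral theorem\<close>

lemma symmetric_mat_inner:
  assumes "symmetric_mat S"
  shows "(S *v x) \<bullet> y = x \<bullet> (S *v y)"
proof -
  have "x \<bullet> (S *v y) = (x v* S) \<bullet> y" by (simp add: dot_lmul_matrix)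
  also have "x v* S = transpose S *v x" by simp
  also have "transpose S = S" using assms by (simp add: symmetric_mat_def)
  finally show ?thesis by simp
qed

text \<open>A quadratic \<open>2ta + t\<^sup>2b\<close> that is nowhere positive has no linear term; this is the
  first-order condition at a maximum of a quadratic form.\<close>
lemma linear_coeff_zero_if_quadratic_nonpos:
  fixes a b :: real
  assumes nonpos: "\<And>t. 2*t*a + t^2*b \<le> 0" and "a \<ge> 0"
  shows "a = 0"
proof (rule ccontr)
  assume "a \<noteq> 0"
  with \<open>a \<ge> 0\<close> have a: "a > 0" by simp
  define t where "t = a / (\<bar>b\<bar> + 1)"
  have t: "t > 0" using a by (simp add: t_def)
  have "t * \<bar>b\<bar> < a" using a by (simp add: t_def field_simps)
  then have "t * (t * \<bar>b\<bar>) < t * a" using t by simp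
  moreover have "t^2 * (- \<bar>b\<bar>) \<le> t^2 * b"
    by (rule mult_left_mono) auto
  moreover have "t^2 * (- \<bar>b\<bar>) = - (t * (t * \<bar>b\<bar>))"
    by (simp add: power2_eq_square)
  moreover have "t * a > 0" using t a by simp
  moreover have "2*t*a + t^2*b \<le> 0" by (rule nonpos)
  ultimately show False by linarith
qed

text \<open>The
  residual \<open>y = Sw - \<mu>w\<close> lies in \<open>W\<close> and is orthogonal to \<open>w\<close>; testing the maximality along
  the line \<open>w + ty\<close> forces \<open>y = 0\<close>.\<close>
lemma rayleigh_maximizer_eigenvector:
  fixes S :: "real^'n^'n"
  assumes sym: "symmetric_mat S" and W: "subspace W" and inv: "\<And>x. x \<in> W \<Longrightarrow> S *v x \<in> W"
    and wW: "w \<in> W" and ww: "w \<bullet> w = 1"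
    and max: "\<And>z. z \<in> W \<Longrightarrow> z \<bullet> (S *v z) \<le> (w \<bullet> (S *v w)) * (z \<bullet> z)"
  shows "S *v w = (w \<bullet> (S *v w)) *\<^sub>R w"
proof -
  define \<mu> where "\<mu> = w \<bullet> (S *v w)"
  define y where "y = S *v w - \<mu> *\<^sub>R w"
  have yW: "y \<in> W"
    unfolding y_def using W wW inv by (intro subspace_diff subspace_scale) auto
  have wy: "w \<bullet> y = 0"
    by (simp add: y_def inner_diff_right \<mu>_def ww)
  have ySw: "y \<bullet> (S *v w) = y \<bullet> y"
  proof -
    have "y \<bullet> y = y \<bullet> (S *v w) - \<mu> * (y \<bullet> w)" by (simp add: y_def inner_diff_right)
    then show ?thesis using wy by (simp add: inner_commute)
  qed
  have Swy: "w \<bullet> (S *v y) = y \<bullet> y"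
    using ySw symmetric_mat_inner[OF sym, of y w] by (simp add: inner_commute)
  have "2*t*(y \<bullet> y) + t^2*(y \<bullet> (S *v y) - \<mu> * (y \<bullet> y)) \<le> 0" for t
  proof -
    have "w + t *\<^sub>R y \<in> W"
      using W wW yW by (intro subspace_add subspace_scale)
    from max[OF this] have
      "(w + t *\<^sub>R y) \<bullet> (S *v (w + t *\<^sub>R y)) \<le> \<mu> * ((w + t *\<^sub>R y) \<bullet> (w + t *\<^sub>R y))"
      by (simp add: \<mu>_def)
    moreover have "(w + t *\<^sub>R y) \<bullet> (S *v (w + t *\<^sub>R y)) = \<mu> + 2*t*(y \<bullet> y) + t^2 * (y \<bullet> (S *v y))"
      using ySw Swy by (simp add: matrix_vector_right_distrib matrix_vector_mult_scaleR inner_add_left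
          inner_add_right \<mu>_def power2_eq_square algebra_simps)
    moreover have "(w + t *\<^sub>R y) \<bullet> (w + t *\<^sub>R y) = 1 + t^2 * (y \<bullet> y)"
      using ww wy by (simp add: inner_add_left inner_add_right power2_eq_square inner_commute)
    ultimately have "\<mu> + 2*t*(y \<bullet> y) + t^2 * (y \<bullet> (S *v y)) \<le> \<mu> * (1 + t^2 * (y \<bullet> y))"
      by simp
    then show ?thesis by (simp add: algebra_simps)
  qed
  then have "y \<bullet> y = 0"
    by (intro linear_coeff_zero_if_quadratic_nonpos) auto
  then show ?thesis
    by (simp add: y_def \<mu>_def)
qed

text \<open>The orthogonal complement of a nonzero-codimensional set \<open>E\<close> of eigenvectors contains a
  unit eigenvector: a maximiser of the Rayleigh quotient on its (compact) unit sphere.\<close>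
lemma eigenvector_orthogonal_to_eigenvectors:
  fixes S :: "real^'n^'n"
  assumes sym: "symmetric_mat S"
    and eig: "\<forall>e\<in>E. \<exists>c. S *v e = c *\<^sub>R e"
    and nz: "y0 \<noteq> 0" "\<forall>e\<in>E. e \<bullet> y0 = 0"
  shows "\<exists>w. norm w = 1 \<and> (\<forall>e\<in>E. e \<bullet> w = 0) \<and> (\<exists>c. S *v w = c *\<^sub>R w)"
proof -
  define W where "W = {y. \<forall>e\<in>E. e \<bullet> y = 0}"
  define K where "K = W \<inter> sphere 0 1"
  have W: "subspace W"
    using subspace_orthogonal_to_vectors[of E] by (simp add: W_def orthogonal_def)
  have "closed W"
    unfolding W_def
    by (simp add: Collect_ball_eq closed_INT closed_Collect_eq continuous_on_inner
        continuous_on_const continuous_on_id)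
  then have "compact K"
    by (simp add: K_def compact_Int_closed closed_Int_compact)
  moreover have "y0 /\<^sub>R norm y0 \<in> K"
    using nz by (auto simp: K_def W_def inner_commute)
  moreover have "continuous_on K (\<lambda>y. y \<bullet> (S *v y))"
    by (intro continuous_intros)
  ultimately obtain w where w: "w \<in> K"
    and wmax: "\<And>z. z \<in> K \<Longrightarrow> z \<bullet> (S *v z) \<le> w \<bullet> (S *v w)"
    using continuous_attains_sup[of K "\<lambda>y. y \<bullet> (S *v y)"] by blast
  have wW: "w \<in> W" and ww: "w \<bullet> w = 1"
    using w by (auto simp: K_def norm_eq_1)
  text \<open>Rescaling extends the maximality from the unit sphere to all of \<open>W\<close>.\<close>
  have max: "z \<bullet> (S *v z) \<le> (w \<bullet> (S *v w)) * (z \<bullet> z)" if "z \<in> W" for z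
  proof (cases "z = 0")
    case False
    have "z /\<^sub>R norm z \<in> K"
      using that False by (auto simp: K_def W_def)
    then have "(z \<bullet> (S *v z)) / (norm z)^2 \<le> w \<bullet> (S *v w)"
      using wmax[of "z /\<^sub>R norm z"]
      by (simp add: matrix_vector_mult_scaleR power2_eq_square divide_inverse mult_ac)
    then have "z \<bullet> (S *v z) \<le> (w \<bullet> (S *v w)) * (norm z)^2"
      using False by (simp add: divide_le_eq)
    then show ?thesis by (simp add: power2_norm_eq_inner)
  qed simp
  text \<open>\<open>W\<close> is \<open>S\<close>-invariant because \<open>S\<close> is self-adjoint and preserves the lines through \<open>E\<close>.\<close>
  have inv: "S *v x \<in> W" if "x \<in> W" for x
  proof -
    have "e \<bullet> (S *v x) = 0" if e: "e \<in> E" for e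
    proof -
      obtain c where c: "S *v e = c *\<^sub>R e" using eig e by blast
      have "e \<bullet> (S *v x) = (S *v e) \<bullet> x"
        using symmetric_mat_inner[OF sym] by simp
      also have "\<dots> = c * (e \<bullet> x)" using c by simp
      finally show ?thesis using \<open>x \<in> W\<close> e by (simp add: W_def)
    qed
    then show ?thesis by (simp add: W_def)
  qed
  have "S *v w = (w \<bullet> (S *v w)) *\<^sub>R w"
    by (rule rayleigh_maximizer_eigenvector[OF sym W inv wW ww max])
  then show ?thesis
    using w wW by (auto simp: K_def W_def)
qed

lemma orthonormal_eigenvectors:
  fixes S :: "real^'n^'n"
  assumes sym: "symmetric_mat S" and "k \<le> CARD('n)"
  shows "\<exists>E::(real^'n) set. finite E \<and> card E = k \<and>
     (\<forall>e\<in>E. norm e = 1 \<and> (\<exists>c. S *v e = c *\<^sub>R e)) \<and> (\<forall>e\<in>E. \<forall>f\<in>E. e \<noteq> f \<longrightarrow> e \<bullet> f = 0)"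
  using \<open>k \<le> CARD('n)\<close>
proof (induction k)
  case 0
  show ?case by (intro exI[of _ "{}"]) auto
next
  case (Suc k)
  then obtain E :: "(real^'n) set" where E: "finite E" "card E = k"
    "\<forall>e\<in>E. norm e = 1 \<and> (\<exists>c. S *v e = c *\<^sub>R e)" "\<forall>e\<in>E. \<forall>f\<in>E. e \<noteq> f \<longrightarrow> e \<bullet> f = 0"
    by auto
  have "span E \<noteq> UNIV"
    using dim_le_card[of UNIV E] E(1,2) Suc.prems by auto
  then obtain a :: "real^'n" where "a \<noteq> 0" "\<forall>x \<in> span E. a \<bullet> x = 0"
    using span_not_UNIV_orthogonal by blast
  then have "\<forall>e\<in>E. e \<bullet> a = 0"
    using span_base by (metis inner_commute)
  then obtain w where w: "norm w = 1" "\<forall>e\<in>E. e \<bullet> w = 0" "\<exists>c. S *v w = c *\<^sub>R w"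
    using eigenvector_orthogonal_to_eigenvectors[OF sym, of E a] E(3) \<open>a \<noteq> 0\<close> by blast
  then have "w \<notin> E" by auto
  then show ?case
    using E w by (intro exI[of _ "insert w E"]) (auto simp: inner_commute)
qed

text \<open>Eigenbases are encoded as orthogonal matrices whose rows are eigenvectors.\<close>
definition orth_eigenbasis :: "real^'n^'n \<Rightarrow> real^'n^'n \<Rightarrow> ('n \<Rightarrow> real) \<Rightarrow> bool" where
  "orth_eigenbasis S B lam \<longleftrightarrow> orthogonal_matrix B \<and> (\<forall>i. S *v B$i = lam i *\<^sub>R B$i)"

lemma orthogonal_matrix_rows_inner:
  assumes "orthogonal_matrix (B::real^'n^'n)"
  shows "B$i \<bullet> B$j = (if i = j then 1 else 0)"
proof -
  have "B ** transpose B = mat 1"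
    using assms by (simp add: orthogonal_matrix_def)
  then have "(B ** transpose B)$i$j = (mat 1 :: real^'n^'n)$i$j" by simp
  then show ?thesis
    by (simp add: matrix_mult_transpose_dot_row row_def mat_def)
qed

lemma orthogonal_matrix_of_rows:
  assumes "\<And>i j. B$i \<bullet> B$j = (if i = j then 1 else (0::real))"
  shows "orthogonal_matrix (B::real^'n^'n)"
proof -
  have "B ** transpose B = mat 1"
    using assms by (simp add: matrix_mult_transpose_dot_row vec_eq_iff mat_def row_def)
  then show ?thesis
    using matrix_left_right_inverse orthogonal_matrix_def by blast
qed

theorem spectral_theorem:
  fixes S :: "real^'n^'n"
  assumes "symmetric_mat S"
  shows "\<exists>B lam. orth_eigenbasis S B lam"
proof -
  obtain E :: "(real^'n) set" where E: "finite E" "card E = CARD('n)"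
    "\<forall>e\<in>E. norm e = 1 \<and> (\<exists>c. S *v e = c *\<^sub>R e)" "\<forall>e\<in>E. \<forall>f\<in>E. e \<noteq> f \<longrightarrow> e \<bullet> f = 0"
    using orthonormal_eigenvectors[OF assms order.refl] by blast
  obtain f where f: "bij_betw f (UNIV::'n set) E"
    using finite_same_card_bij[of "UNIV::'n set" E] E(1,2) by auto
  define B :: "real^'n^'n" where "B = (\<chi> i. f i)"
  have fE: "f i \<in> E" and f_inj: "f i = f j \<longleftrightarrow> i = j" for i j
    using f by (auto simp: bij_betw_def inj_on_def)
  have "orthogonal_matrix B"
    using E(3,4) fE f_inj by (intro orthogonal_matrix_of_rows) (auto simp: B_def norm_eq_1)
  moreover have "\<forall>i. \<exists>c. S *v B$i = c *\<^sub>R B$i"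
    using E(3) fE by (simp add: B_def)
  ultimately show ?thesis
    unfolding orth_eigenbasis_def by metis
qed

lemma orthogonal_matrix_expansion:
  assumes "orthogonal_matrix (B::real^'n^'n)"
  shows "y = (\<Sum>k\<in>UNIV. (B$k \<bullet> y) *\<^sub>R B$k)"
proof -
  have "y = transpose B *v (B *v y)"
    using assms by (simp add: orthogonal_matrix_def matrix_vector_mul_assoc)
  also have "\<dots> = (\<Sum>k\<in>UNIV. (B$k \<bullet> y) *\<^sub>R B$k)"
    by (simp add: vec_eq_iff matrix_vector_mult_def transpose_def inner_vec_def sum_component
        mult.commute)
  finally show ?thesis .
qed

lemma orthogonal_matrix_single_coordinate:
  assumes "orthogonal_matrix (B::real^'n^'n)" and "\<And>k. k \<noteq> i \<Longrightarrow> B$k \<bullet> y = 0"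
  shows "y = (B$i \<bullet> y) *\<^sub>R B$i"
proof -
  have "y = (\<Sum>k\<in>UNIV. (B$k \<bullet> y) *\<^sub>R B$k)"
    by (rule orthogonal_matrix_expansion[OF assms(1)])
  also have "\<dots> = (\<Sum>k\<in>{i}. (B$k \<bullet> y) *\<^sub>R B$k)"
    using assms(2) by (intro sum.mono_neutral_right) auto
  finally show ?thesis by simp
qed

lemma orthogonal_matrix_row_nonzero: "orthogonal_matrix (B::real^'n^'n) \<Longrightarrow> B$i \<noteq> 0"
  using orthogonal_matrix_rows_inner[of B i i] by auto

lemma span_rows_iff:
  assumes B: "orthogonal_matrix (B::real^'n^'n)"
  shows "y \<in> span ((\<lambda>i. B$i) ` J) \<longleftrightarrow> (\<forall>j. j \<notin> J \<longrightarrow> B$j \<bullet> y = 0)"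
proof
  assume y: "y \<in> span ((\<lambda>i. B$i) ` J)"
  show "\<forall>j. j \<notin> J \<longrightarrow> B$j \<bullet> y = 0"
  proof (intro allI impI)
    fix j assume "j \<notin> J"
    then have "\<forall>x\<in>(\<lambda>i. B$i) ` J. orthogonal (B$j) x"
      using orthogonal_matrix_rows_inner[OF B] by (auto simp: orthogonal_def)
    then have "orthogonal (B$j) y" using orthogonal_to_span[OF y, of "B$j"] by blast
    then show "B$j \<bullet> y = 0" by (simp add: orthogonal_def)
  qed
next
  assume "\<forall>j. j \<notin> J \<longrightarrow> B$j \<bullet> y = 0"
  then have "(\<Sum>k\<in>UNIV. (B$k \<bullet> y) *\<^sub>R B$k) = (\<Sum>k\<in>J. (B$k \<bullet> y) *\<^sub>R B$k)"
    by (intro sum.mono_neutral_right) auto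
  then have "y = (\<Sum>k\<in>J. (B$k \<bullet> y) *\<^sub>R B$k)"
    using orthogonal_matrix_expansion[OF B, of y] by simp
  also have "\<dots> \<in> span ((\<lambda>i. B$i) ` J)"
    by (intro span_sum span_scale span_base) auto
  finally show "y \<in> span ((\<lambda>i. B$i) ` J)" .
qed

text \<open>A matrix leaves invariant a coordinate subspace iff it has no matrix entries from the
  coordinates inside to the coordinates outside.  This is the coordinate form of \<open>L_invar\<close>.\<close>
definition coord_invariant :: "real^'n^'n \<Rightarrow> real^'n^'n \<Rightarrow> bool" where
  "coord_invariant B L \<longleftrightarrow>
     (\<exists>J. J \<noteq> {} \<and> J \<noteq> UNIV \<and> (\<forall>i\<in>J. \<forall>j. j \<notin> J \<longrightarrow> B$j \<bullet> (L *v B$i) = 0))"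

lemma invariant_span_rows_iff:
  assumes B: "orthogonal_matrix (B::real^'n^'n)"
  shows "(\<forall>x \<in> span ((\<lambda>i. B$i) ` J). L *v x \<in> span ((\<lambda>i. B$i) ` J))
     \<longleftrightarrow> (\<forall>i\<in>J. \<forall>j. j \<notin> J \<longrightarrow> B$j \<bullet> (L *v B$i) = 0)"
proof
  assume inv: "\<forall>x \<in> span ((\<lambda>i. B$i) ` J). L *v x \<in> span ((\<lambda>i. B$i) ` J)"
  show "\<forall>i\<in>J. \<forall>j. j \<notin> J \<longrightarrow> B$j \<bullet> (L *v B$i) = 0"
  proof (intro ballI allI impI)
    fix i j assume "i \<in> J" "j \<notin> J"
    then have "L *v B$i \<in> span ((\<lambda>i. B$i) ` J)" using inv span_base by blast
    then show "B$j \<bullet> (L *v B$i) = 0" using span_rows_iff[OF B] \<open>j \<notin> J\<close> by blast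
  qed
next
  assume "\<forall>i\<in>J. \<forall>j. j \<notin> J \<longrightarrow> B$j \<bullet> (L *v B$i) = 0"
  then have "(\<lambda>i. B$i) ` J \<subseteq> {x. L *v x \<in> span ((\<lambda>i. B$i) ` J)}"
    using span_rows_iff[OF B] by auto
  moreover have "subspace {x. L *v x \<in> span ((\<lambda>i. B$i) ` J)}"
    unfolding subspace_def
    by (auto simp: matrix_vector_right_distrib matrix_vector_mult_scaleR span_add span_scale span_zero)
  ultimately show "\<forall>x \<in> span ((\<lambda>i. B$i) ` J). L *v x \<in> span ((\<lambda>i. B$i) ` J)"
    using span_minimal by blast
qed

lemma L_invar_rows_iff:
  assumes "orthogonal_matrix (B::real^'n^'n)"
  shows "L \<in> L_invar (\<lambda>i. B$i) \<longleftrightarrow> skew_mat L \<and> coord_invariant B L"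
  unfolding L_invar_def coord_invariant_def using invariant_span_rows_iff[OF assms] by auto

lemma coord_invariant_rescaled_basis:
  assumes "surj \<sigma>" and B': "\<And>j. B'$j = c j *\<^sub>R B$(\<sigma> j)" and "coord_invariant B L"
  shows "coord_invariant B' L"
proof -
  obtain J where J: "J \<noteq> {}" "J \<noteq> UNIV" "\<forall>i\<in>J. \<forall>j. j \<notin> J \<longrightarrow> B$j \<bullet> (L *v B$i) = 0"
    using assms(3) by (auto simp: coord_invariant_def)
  obtain i j where "i \<in> J" "j \<notin> J" using J(1,2) by blast
  moreover obtain i' j' where "i = \<sigma> i'" "j = \<sigma> j'"
    using surjD[OF \<open>surj \<sigma>\<close>] by blast
  ultimately have "i' \<in> \<sigma> -` J" "j' \<notin> \<sigma> -` J" by simp_all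
  then have "\<sigma> -` J \<noteq> {}" "\<sigma> -` J \<noteq> UNIV" by blast+
  moreover have "\<forall>i\<in>\<sigma> -` J. \<forall>j. j \<notin> \<sigma> -` J \<longrightarrow> B'$j \<bullet> (L *v B'$i) = 0"
  proof (intro ballI allI impI)
    fix i j assume "i \<in> \<sigma> -` J" "j \<notin> \<sigma> -` J"
    then have "B$(\<sigma> j) \<bullet> (L *v B$(\<sigma> i)) = 0" using J(3) by simp
    then show "B'$j \<bullet> (L *v B'$i) = 0" by (simp add: B' matrix_vector_mult_scaleR)
  qed
  ultimately show ?thesis
    unfolding coord_invariant_def by blast
qed

lemma eigen_coordinate:
  assumes sym: "symmetric_mat S" and eB: "orth_eigenbasis S B lam" and ev: "S *v y = c *\<^sub>R y"
  shows "(lam k - c) * (B$k \<bullet> y) = 0"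
proof -
  have "c * (B$k \<bullet> y) = B$k \<bullet> (S *v y)"
    using ev by simp
  also have "\<dots> = (S *v B$k) \<bullet> y"
    by (rule symmetric_mat_inner[OF sym, symmetric])
  also have "\<dots> = lam k * (B$k \<bullet> y)"
    using eB by (simp add: orth_eigenbasis_def)
  finally show ?thesis by (simp add: algebra_simps) auto
qed

lemma eigenvalues_eq_range:
  assumes sym: "symmetric_mat S" and eB: "orth_eigenbasis S B lam"
  shows "eigenvalues S = range lam"
proof
  show "range lam \<subseteq> eigenvalues S"
    using eB orthogonal_matrix_row_nonzero by (auto simp: eigenvalues_def orth_eigenbasis_def)
  show "eigenvalues S \<subseteq> range lam"
  proof
    fix c assume "c \<in> eigenvalues S"
    then obtain y where y: "y \<noteq> 0" "S *v y = c *\<^sub>R y" by (auto simp: eigenvalues_def)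
    have "\<exists>k. B$k \<bullet> y \<noteq> 0"
    proof (rule ccontr)
      assume "\<not> (\<exists>k. B$k \<bullet> y \<noteq> 0)"
      then have "(\<Sum>k\<in>UNIV. (B$k \<bullet> y) *\<^sub>R B$k) = 0" by simp
      then show False
        using y(1) eB orthogonal_matrix_expansion[of B y] by (simp add: orth_eigenbasis_def)
    qed
    then obtain k where "B$k \<bullet> y \<noteq> 0" by blast
    then have "c = lam k"
      using eigen_coordinate[OF sym eB y(2), of k] by simp
    then show "c \<in> range lam" by simp
  qed
qed

lemma S_neq_iff_inj:
  assumes sym: "symmetric_mat (S::real^'n^'n)" and eB: "orth_eigenbasis S B lam"
  shows "S \<in> S_neq \<longleftrightarrow> inj lam"
proof -
  have "card (range lam) = CARD('n) \<longleftrightarrow> inj lam"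
    using inj_on_iff_eq_card[of "UNIV::'n set" lam] by simp
  then show ?thesis
    using eigenvalues_eq_range[OF assms] sym by (simp add: S_neq_def)
qed

lemma simple_eigenvector:
  assumes sym: "symmetric_mat S" and eB: "orth_eigenbasis S B lam" and "inj lam"
    and ev: "S *v y = lam i *\<^sub>R y"
  shows "y = (B$i \<bullet> y) *\<^sub>R B$i"
proof (rule orthogonal_matrix_single_coordinate)
  show "orthogonal_matrix B" using eB by (simp add: orth_eigenbasis_def)
  fix k assume "k \<noteq> i"
  then have "lam k \<noteq> lam i" using \<open>inj lam\<close> by (simp add: inj_eq)
  then show "B$k \<bullet> y = 0" using eigen_coordinate[OF sym eB ev, of k] by simp
qed

lemma simple_spectrum_eigenbases:
  assumes sym: "symmetric_mat S" and eB: "orth_eigenbasis S B lam" and "inj lam"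
    and eB': "orth_eigenbasis S B' lam'"
  obtains \<sigma> where "surj \<sigma>" and "\<And>j. B'$j = (B$(\<sigma> j) \<bullet> B'$j) *\<^sub>R B$(\<sigma> j)"
proof -
  have ranges: "range lam' = range lam"
    using eigenvalues_eq_range[OF sym eB] eigenvalues_eq_range[OF sym eB'] by simp
  then have "\<forall>j. \<exists>k. lam' j = lam k" by blast
  from choice[OF this] obtain \<sigma> where \<sigma>: "\<forall>j. lam' j = lam (\<sigma> j)" by blast
  have "k \<in> range \<sigma>" for k
  proof -
    have "lam k \<in> range lam'" using ranges by simp
    then obtain j where "lam k = lam (\<sigma> j)" using \<sigma> by auto
    then show "k \<in> range \<sigma>" using \<open>inj lam\<close> by (simp add: inj_eq)
  qed
  then have "surj \<sigma>" by blast
  moreover have "B'$j = (B$(\<sigma> j) \<bullet> B'$j) *\<^sub>R B$(\<sigma> j)" for j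
    using eB' \<sigma> by (intro simple_eigenvector[OF sym eB \<open>inj lam\<close>]) (simp add: orth_eigenbasis_def)
  ultimately show ?thesis using that by blast
qed

lemma coord_invariant_eigenbasis_independent:
  assumes sym: "symmetric_mat S" and "S \<in> S_neq"
    and eB: "orth_eigenbasis S B lam" and eB': "orth_eigenbasis S B' lam'"
    and "coord_invariant B L"
  shows "coord_invariant B' L"
proof -
  have "inj lam" using S_neq_iff_inj[OF sym eB] \<open>S \<in> S_neq\<close> by simp
  then obtain \<sigma> where "surj \<sigma>" and "\<And>j. B'$j = (B$(\<sigma> j) \<bullet> B'$j) *\<^sub>R B$(\<sigma> j)"
    using simple_spectrum_eigenbases[OF sym eB _ eB'] by blast
  then show ?thesis
    by (rule coord_invariant_rescaled_basis) (rule \<open>coord_invariant B L\<close>)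
qed

lemma chosen_eigenbasis:
  assumes "symmetric_mat (S::real^'n^'n)"
  obtains B lam where "orth_eigenbasis S B lam" and "(SOME b. eigenbasis S b) = (\<lambda>i. B$i)"
proof -
  have ex: "\<exists>b. eigenbasis S b"
  proof -
    obtain B lam where "orth_eigenbasis S B lam" using spectral_theorem[OF assms] by blast
    then have "eigenbasis S (\<lambda>i. B$i)"
      by (auto simp: eigenbasis_def orthonormal_basis_def orth_eigenbasis_def
          orthogonal_matrix_rows_inner)
    then show ?thesis by blast
  qed
  define b where "b = (SOME b. eigenbasis S b)"
  have "eigenbasis S b" unfolding b_def using ex by (rule someI_ex)
  then obtain lam where "\<forall>i. S *v b i = lam i *\<^sub>R b i"
    unfolding eigenbasis_def by metis
  moreover have "orthogonal_matrix (\<chi> i. b i)"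
    using \<open>eigenbasis S b\<close> by (intro orthogonal_matrix_of_rows) (simp add: eigenbasis_def orthonormal_basis_def)
  ultimately have "orth_eigenbasis S (\<chi> i. b i) lam"
    by (simp add: orth_eigenbasis_def)
  moreover have "(SOME b. eigenbasis S b) = (\<lambda>i. (\<chi> i. b i) $ i)"
    by (simp add: b_def)
  ultimately show ?thesis by (rule that)
qed

lemma l_set_iff:
  assumes sym: "symmetric_mat S" and "S \<in> S_neq" and eB: "orth_eigenbasis S B lam"
  shows "L \<in> l_set S \<longleftrightarrow> skew_mat L \<and> \<not> coord_invariant B L"
proof -
  obtain B0 lam0 where eB0: "orth_eigenbasis S B0 lam0"
    and chosen: "(SOME b. eigenbasis S b) = (\<lambda>i. B0$i)"
    using chosen_eigenbasis[OF sym] by blast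
  have "orthogonal_matrix B0" using eB0 by (simp add: orth_eigenbasis_def)
  moreover have "coord_invariant B0 L \<longleftrightarrow> coord_invariant B L"
    using coord_invariant_eigenbasis_independent[OF sym \<open>S \<in> S_neq\<close> eB0 eB]
      coord_invariant_eigenbasis_independent[OF sym \<open>S \<in> S_neq\<close> eB eB0] by blast
  ultimately show ?thesis
    unfolding l_set_def chosen by (auto simp: L_invar_rows_iff)
qed

definition sym_part :: "real^'n^'n \<Rightarrow> real^'n^'n" where
  "sym_part X = (1/2) *\<^sub>R (X + transpose X)"

definition skew_part :: "real^'n^'n \<Rightarrow> real^'n^'n" where
  "skew_part X = (1/2) *\<^sub>R (X - transpose X)"

lemma symmetric_sym_part: "symmetric_mat (sym_part X)"
  by (simp add: symmetric_mat_def sym_part_def transpose_scalar transpose_add add.commute)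

lemma skew_skew_part: "skew_mat (skew_part X)"
  by (simp add: skew_mat_def skew_part_def transpose_scalar)
    (simp add: transpose_def vec_eq_iff field_simps)

lemma sym_part_plus_skew_part: "sym_part X + skew_part X = X"
  by (simp add: sym_part_def skew_part_def vec_eq_iff field_simps)

lemma parts_of_sym_plus_skew:
  assumes "symmetric_mat S" "skew_mat L"
  shows "sym_part (S + L) = S" "skew_part (S + L) = L"
  using assms
  by (simp_all add: sym_part_def skew_part_def transpose_add symmetric_mat_def skew_mat_def
      vec_eq_iff)

lemma continuous_on_sym_part[continuous_intros]:
  "continuous_on U f \<Longrightarrow> continuous_on U (\<lambda>x. sym_part (f x :: real^'n^'n))"
  unfolding sym_part_def by (intro continuous_intros)

lemma continuous_on_skew_part[continuous_intros]:
  "continuous_on U f \<Longrightarrow> continuous_on U (\<lambda>x. skew_part (f x :: real^'n^'n))"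
  unfolding skew_part_def by (intro continuous_intros)

lemma inner_sym_part: "x \<bullet> (sym_part A *v y) = (x \<bullet> (A *v y) + y \<bullet> (A *v x)) / 2"
  by (simp add: sym_part_def matrix_vector_mult_add_rdistrib scaleR_matrix_vector_assoc[symmetric]
      inner_add_right inner_transpose del: transpose_matrix_vector)

lemma inner_skew_part: "x \<bullet> (skew_part A *v y) = (x \<bullet> (A *v y) - y \<bullet> (A *v x)) / 2"
  by (simp add: skew_part_def matrix_vector_mult_diff_rdistrib scaleR_matrix_vector_assoc[symmetric]
      inner_diff_right inner_transpose del: transpose_matrix_vector)

lemma sym_part_add_scaled: "sym_part (X + t *\<^sub>R E) = sym_part X + t *\<^sub>R sym_part E"
  by (simp add: sym_part_def transpose_add transpose_scalar algebra_simps)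

lemma skew_part_add_scaled: "skew_part (X + t *\<^sub>R E) = skew_part X + t *\<^sub>R skew_part E"
  by (simp add: skew_part_def transpose_add transpose_scalar algebra_simps)

lemma M_set_iff:
  assumes eB: "orth_eigenbasis (sym_part X) B lam"
  shows "X \<in> M_set \<longleftrightarrow> inj lam \<and> \<not> coord_invariant B (skew_part X)"
proof
  assume "X \<in> M_set"
  then obtain S L where X: "X = S + L" and "S \<in> S_neq" and L: "L \<in> l_set S"
    by (auto simp: M_set_def)
  have sS: "symmetric_mat S" and sL: "skew_mat L"
    using \<open>S \<in> S_neq\<close> L by (simp_all add: S_neq_def l_set_def)
  have parts: "sym_part X = S" "skew_part X = L"
    using parts_of_sym_plus_skew[OF sS sL] X by simp_all
  then have eBS: "orth_eigenbasis S B lam" using eB by simp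
  show "inj lam \<and> \<not> coord_invariant B (skew_part X)"
    using S_neq_iff_inj[OF sS eBS] l_set_iff[OF sS \<open>S \<in> S_neq\<close> eBS] \<open>S \<in> S_neq\<close> L parts
    by simp
next
  assume "inj lam \<and> \<not> coord_invariant B (skew_part X)"
  define S L where "S = sym_part X" and "L = skew_part X"
  have sS: "symmetric_mat S" and sL: "skew_mat L" and eBS: "orth_eigenbasis S B lam"
    using eB by (simp_all add: S_def L_def symmetric_sym_part skew_skew_part)
  have "S \<in> S_neq"
    using S_neq_iff_inj[OF sS eBS] \<open>inj lam \<and> _\<close> by simp
  moreover have "L \<in> l_set S"
    using l_set_iff[OF sS \<open>S \<in> S_neq\<close> eBS] sL \<open>inj lam \<and> _\<close> by (simp add: L_def)
  moreover have "X = S + L"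
    by (simp add: S_def L_def sym_part_plus_skew_part)
  ultimately show "X \<in> M_set"
    unfolding M_set_def by blast
qed

section \<open>\<open>M_set\<close> is open\<close>

text \<open>The orthogonal group is compact: closed, and bounded since all rows are unit vectors.\<close>
lemma compact_orthogonal_matrices: "compact {B::real^'n^'n. orthogonal_matrix B}"
proof -
  have "closed {B::real^'n^'n. orthogonal_matrix B}"
    unfolding orthogonal_matrix by (intro closed_Collect_eq continuous_intros)
  moreover have "bounded {B::real^'n^'n. orthogonal_matrix B}"
    unfolding bounded_iff
  proof (intro exI ballI)
    fix B :: "real^'n^'n" assume "B \<in> {B. orthogonal_matrix B}"
    then have "norm (B$i) = 1" for i
      using orthogonal_matrix_rows_inner[of B i i] by (simp add: norm_eq_1)
    moreover have "norm B \<le> (\<Sum>i\<in>UNIV. norm (B$i))"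
      unfolding norm_vec_def by (rule L2_set_le_sum) simp
    ultimately show "norm B \<le> real CARD('n)" by simp
  qed
  ultimately show ?thesis by (simp add: compact_eq_bounded_closed)
qed

text \<open>Coordinate invariance is a closed condition: a finite union, over the proper nonempty
  index sets \<open>J\<close>, of finite intersections of zero sets of continuous functions.\<close>
lemma closed_coord_invariant:
  fixes f g :: "'a::topological_space \<Rightarrow> real^'n^'n"
  assumes "continuous_on UNIV f" "continuous_on UNIV g"
  shows "closed {p. coord_invariant (f p) (g p)}"
proof -
  have "{p. coord_invariant (f p) (g p)} =
      (\<Union>J\<in>{J. J \<noteq> {} \<and> J \<noteq> UNIV}. \<Inter>i\<in>J. \<Inter>j\<in>- J. {p. f p $ j \<bullet> (g p *v f p $ i) = 0})"
    unfolding coord_invariant_def by blast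
  moreover have "closed {p. f p $ j \<bullet> (g p *v f p $ i) = 0}" for i j
    using assms by (intro closed_Collect_eq continuous_intros) auto
  ultimately show ?thesis
    by (simp add: closed_UN closed_INT)
qed

text \<open>Pairs \<open>(B, X)\<close> where the rows of \<open>B\<close> are eigenvectors of the symmetric part of \<open>X\<close>
  (with Rayleigh quotients as eigenvalues) and \<open>X\<close> violates one of the two conditions of
  \<open>M_set_iff\<close>.\<close>
definition degenerate_pairs :: "((real^'n^'n) \<times> (real^'n^'n)) set" where
  "degenerate_pairs = {(B, X).
     (\<forall>i. sym_part X *v B$i = (B$i \<bullet> (sym_part X *v B$i)) *\<^sub>R B$i) \<and>
     ((\<exists>i j. i \<noteq> j \<and> B$i \<bullet> (sym_part X *v B$i) = B$j \<bullet> (sym_part X *v B$j))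
       \<or> coord_invariant B (skew_part X))}"

lemma closed_degenerate_pairs: "closed (degenerate_pairs :: ((real^'n^'n) \<times> (real^'n^'n)) set)"
proof -
  define r where "r i p = fst p $ i \<bullet> (sym_part (snd p) *v fst p $ i)"
    for i and p :: "(real^'n^'n) \<times> (real^'n^'n)"
  have r: "continuous_on UNIV (r i)" for i
    unfolding r_def by (intro continuous_intros)
  have eigen: "closed {p. \<forall>i. sym_part (snd p) *v fst p $ i = r i p *\<^sub>R fst p $ i}"
    using r by (intro closed_Collect_all closed_Collect_eq continuous_intros) auto
  have "{p. \<exists>i j. i \<noteq> j \<and> r i p = r j p} = (\<Union>i. \<Union>j\<in>- {i}. {p. r i p = r j p})"
    by fastforce
  moreover have "closed (\<Union>i. \<Union>j\<in>- {i}. {p. r i p = r j p})"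
    using r by (intro closed_UN ballI closed_Collect_eq) auto
  ultimately have repeated: "closed {p. \<exists>i j. i \<noteq> j \<and> r i p = r j p}"
    by simp
  have invariant: "closed {p. coord_invariant (fst p) (skew_part (snd p))}"
    by (intro closed_coord_invariant continuous_intros)
  have decomposition: "(degenerate_pairs :: ((real^'n^'n) \<times> (real^'n^'n)) set) =
      {p. \<forall>i. sym_part (snd p) *v fst p $ i = r i p *\<^sub>R fst p $ i} \<inter>
      ({p. \<exists>i j. i \<noteq> j \<and> r i p = r j p} \<union> {p. coord_invariant (fst p) (skew_part (snd p))})"
    unfolding degenerate_pairs_def r_def set_eq_iff mem_Collect_eq Int_iff Un_iff case_prod_beta
    by (rule allI, rule refl)
  show ?thesis
    by (subst decomposition) (intro closed_Int closed_Un eigen repeated invariant)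
qed

text \<open>For an orthonormal eigenbasis \<open>B\<close> of the symmetric part, \<open>(B, X)\<close> is degenerate exactly
  when \<open>X \<notin> M_set\<close>; the Rayleigh quotients along \<open>B\<close> are the eigenvalues.\<close>
lemma degenerate_pairs_iff:
  assumes eB: "orth_eigenbasis (sym_part X) B lam"
  shows "(B, X) \<in> degenerate_pairs \<longleftrightarrow> X \<notin> M_set"
proof -
  have rayleigh: "B$i \<bullet> (sym_part X *v B$i) = lam i" for i
    using eB orthogonal_matrix_rows_inner[of B i i] by (simp add: orth_eigenbasis_def)
  have "\<forall>i. sym_part X *v B$i = lam i *\<^sub>R B$i"
    using eB by (simp add: orth_eigenbasis_def)
  then have "(B, X) \<in> degenerate_pairs \<longleftrightarrow>
      (\<exists>i j. i \<noteq> j \<and> lam i = lam j) \<or> coord_invariant B (skew_part X)"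
    unfolding degenerate_pairs_def mem_Collect_eq case_prod_conv rayleigh by simp
  then show ?thesis
    using M_set_iff[OF eB] by (auto simp: inj_def)
qed

lemma compl_M_set:
  "- (M_set :: (real^'n^'n) set) = {X. \<exists>B. B \<in> {B. orthogonal_matrix B} \<and> (B, X) \<in> degenerate_pairs}"
proof (intro set_eqI iffI)
  fix X :: "real^'n^'n" assume "X \<in> - M_set"
  obtain B lam where eB: "orth_eigenbasis (sym_part X) B lam"
    using spectral_theorem[OF symmetric_sym_part] by blast
  then have "orthogonal_matrix B" and "(B, X) \<in> degenerate_pairs"
    using degenerate_pairs_iff[OF eB] \<open>X \<in> - M_set\<close> by (simp_all add: orth_eigenbasis_def)
  then show "X \<in> {X. \<exists>B. B \<in> {B. orthogonal_matrix B} \<and> (B, X) \<in> degenerate_pairs}"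
    by blast
next
  fix X :: "real^'n^'n"
  assume "X \<in> {X. \<exists>B. B \<in> {B. orthogonal_matrix B} \<and> (B, X) \<in> degenerate_pairs}"
  then obtain B where "orthogonal_matrix B" and deg: "(B, X) \<in> degenerate_pairs" by blast
  then have "orth_eigenbasis (sym_part X) B (\<lambda>i. B$i \<bullet> (sym_part X *v B$i))"
    by (simp add: degenerate_pairs_def orth_eigenbasis_def)
  then show "X \<in> - M_set"
    using degenerate_pairs_iff deg by blast
qed

theorem open_M_set: "open (M_set :: (real^'n^'n) set)"
  unfolding open_closed compl_M_set
  by (rule closed_compact_projection[OF compact_orthogonal_matrices closed_degenerate_pairs])

section \<open>\<open>M_set\<close> is dense\<close>

lemma inner_rows_conjugate:
  assumes "orthogonal_matrix (B::real^'n^'n)"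
  shows "B$j \<bullet> ((transpose B ** W ** B) *v B$i) = W$j$i"
proof -
  have axis: "B *v B$k = axis k 1" for k
    by (simp add: vec_eq_iff matrix_vector_mul_component orthogonal_matrix_rows_inner[OF assms]
        axis_def)
  have "B$j \<bullet> ((transpose B ** W ** B) *v B$i) = B$j \<bullet> (transpose B *v (W *v axis i 1))"
    by (simp only: matrix_vector_mul_assoc[symmetric] axis)
  also have "\<dots> = (W *v axis i 1) \<bullet> axis j 1"
    by (simp only: inner_transpose axis)
  also have "\<dots> = W$j$i"
    by (simp add: matrix_vector_mult_basis inner_axis column_def)
  finally show ?thesis .
qed

lemma not_coord_invariant_if_off_diagonal_nonzero:
  assumes "\<And>i j. i \<noteq> j \<Longrightarrow> B$j \<bullet> (L *v B$i) \<noteq> 0"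
  shows "\<not> coord_invariant B L"
proof
  assume "coord_invariant B L"
  then obtain J i j where "i \<in> J" "j \<notin> J" "B$j \<bullet> (L *v B$i) = 0"
    unfolding coord_invariant_def by blast
  then show False using assms[of i j] by blast
qed

lemma finite_roots_affine:
  fixes a b :: "'i::finite \<Rightarrow> 'i \<Rightarrow> real"
  assumes "\<And>i j. i \<noteq> j \<Longrightarrow> b i j \<noteq> 0"
  shows "finite {t. \<exists>i j. i \<noteq> j \<and> a i j + t * b i j = 0}"
proof (rule finite_subset)
  show "{t. \<exists>i j. i \<noteq> j \<and> a i j + t * b i j = 0} \<subseteq> (\<lambda>(i, j). - a i j / b i j) ` (UNIV :: ('i \<times> 'i) set)"
  proof
    fix t assume "t \<in> {t. \<exists>i j. i \<noteq> j \<and> a i j + t * b i j = 0}"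
    then obtain i j where "i \<noteq> j" "a i j + t * b i j = 0" by blast
    then have "t = - a i j / b i j" using assms by (simp add: field_simps)
    then show "t \<in> (\<lambda>(i, j). - a i j / b i j) ` UNIV" by force
  qed
qed simp

text \<open>A test matrix whose symmetric part is diagonal with simple eigenvalues in a given
  orthonormal basis, and whose skew part has no vanishing off-diagonal coefficient there: in
  the basis, take distinct integers on the diagonal and an antisymmetric pattern of \<open>\<plusminus>1\<close> off it.\<close>
lemma test_matrix:
  assumes B: "orthogonal_matrix (B::real^'n^'n)"
  obtains E \<nu> where "inj \<nu>" and "\<And>i. sym_part E *v B$i = \<nu> i *\<^sub>R B$i"
    and "\<And>i j. i \<noteq> j \<Longrightarrow> B$j \<bullet> (skew_part E *v B$i) \<noteq> 0"
proof -
  obtain r :: "'n \<Rightarrow> nat" where r: "inj r"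
    using ex_bij_betw_finite_nat[of "UNIV::'n set"] by (auto simp: bij_betw_def)
  define \<nu> where "\<nu> i = real (r i)" for i
  define W :: "real^'n^'n" where
    "W = (\<chi> a b. if a = b then \<nu> a else if r a < r b then 1 else -1)"
  define E where "E = transpose B ** W ** B"
  have antisym: "W$j$i = - W$i$j" if "i \<noteq> j" for i j
    using that r by (auto simp: W_def inj_eq)
  have coef: "B$j \<bullet> (E *v B$i) = W$j$i" for i j
    unfolding E_def by (rule inner_rows_conjugate[OF B])
  have "inj \<nu>" using r by (simp add: \<nu>_def inj_def)
  moreover have "sym_part E *v B$i = \<nu> i *\<^sub>R B$i" for i
  proof -
    have "B$k \<bullet> (sym_part E *v B$i) = (if k = i then \<nu> i else 0)" for k
      using antisym[of i k] by (simp add: inner_sym_part coef W_def)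
    then show ?thesis
      using orthogonal_matrix_single_coordinate[OF B, of i "sym_part E *v B$i"] by simp
  qed
  moreover have "B$j \<bullet> (skew_part E *v B$i) \<noteq> 0" if "i \<noteq> j" for i j
    using that antisym[OF that] by (simp add: inner_skew_part coef W_def)
  ultimately show ?thesis using that by blast
qed

lemma line_point_in_M_set:
  assumes eB: "orth_eigenbasis (sym_part X) B lam"
    and eigE: "\<And>i. sym_part E *v B$i = \<nu> i *\<^sub>R B$i"
    and distinct: "inj (\<lambda>i. lam i + t * \<nu> i)"
    and off: "\<And>i j. i \<noteq> j \<Longrightarrow>
      B$j \<bullet> (skew_part X *v B$i) + t * (B$j \<bullet> (skew_part E *v B$i)) \<noteq> 0"
  shows "X + t *\<^sub>R E \<in> M_set"
proof -
  have "orth_eigenbasis (sym_part (X + t *\<^sub>R E)) B (\<lambda>i. lam i + t * \<nu> i)"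
    using eB eigE
    by (simp add: orth_eigenbasis_def sym_part_add_scaled matrix_vector_mult_add_rdistrib
        scaleR_matrix_vector_assoc[symmetric] scaleR_add_left)
  moreover have "\<not> coord_invariant B (skew_part (X + t *\<^sub>R E))"
    using off
    by (intro not_coord_invariant_if_off_diagonal_nonzero)
      (simp add: skew_part_add_scaled matrix_vector_mult_add_rdistrib
        scaleR_matrix_vector_assoc[symmetric] inner_add_right)
  ultimately show ?thesis
    using distinct M_set_iff by blast
qed

text \<open>Every matrix lies on a line \<open>X + tE\<close> that meets the complement of \<open>M_set\<close> only finitely
  often: take \<open>E\<close> a test matrix for an eigenbasis of the symmetric part of \<open>X\<close>.\<close>
lemma generic_perturbation:
  fixes X :: "real^'n^'n"
  obtains E where "finite {t. X + t *\<^sub>R E \<notin> M_set}"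
proof -
  obtain B lam where eB: "orth_eigenbasis (sym_part X) B lam"
    using spectral_theorem[OF symmetric_sym_part] by blast
  then have B: "orthogonal_matrix B" by (simp add: orth_eigenbasis_def)
  obtain \<nu> :: "'n \<Rightarrow> real" and E where inj_nu: "inj \<nu>"
    and eigE: "\<And>i. sym_part E *v B$i = \<nu> i *\<^sub>R B$i"
    and offE: "\<And>i j. i \<noteq> j \<Longrightarrow> B$j \<bullet> (skew_part E *v B$i) \<noteq> 0"
    using test_matrix[OF B] by metis
  define c d where "c i j = B$j \<bullet> (skew_part X *v B$i)" and "d i j = B$j \<bullet> (skew_part E *v B$i)"
    for i j
  have "{t. X + t *\<^sub>R E \<notin> M_set} \<subseteq>
      {t. \<exists>i j. i \<noteq> j \<and> (lam i - lam j) + t * (\<nu> i - \<nu> j) = 0} \<union>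
      {t. \<exists>i j. i \<noteq> j \<and> c i j + t * d i j = 0}" (is "_ \<subseteq> ?A \<union> ?C")
  proof (rule subsetI, rule ccontr)
    fix t assume "t \<in> {t. X + t *\<^sub>R E \<notin> M_set}" and "t \<notin> ?A \<union> ?C"
    then have "inj (\<lambda>i. lam i + t * \<nu> i)" and "\<And>i j. i \<noteq> j \<Longrightarrow> c i j + t * d i j \<noteq> 0"
      by (auto simp: inj_def algebra_simps)
    then have "X + t *\<^sub>R E \<in> M_set"
      using line_point_in_M_set[OF eB eigE] by (simp add: c_def d_def)
    then show False using \<open>t \<in> {t. X + t *\<^sub>R E \<notin> M_set}\<close> by simp
  qed
  moreover have "finite {t. \<exists>i j. i \<noteq> j \<and> (lam i - lam j) + t * (\<nu> i - \<nu> j) = 0}"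
    using inj_nu by (intro finite_roots_affine) (simp add: inj_eq)
  moreover have "finite {t. \<exists>i j. i \<noteq> j \<and> c i j + t * d i j = 0}"
    using offE by (intro finite_roots_affine) (simp add: d_def)
  ultimately have "finite {t. X + t *\<^sub>R E \<notin> M_set}"
    by (meson finite_Un finite_subset)
  then show ?thesis by (rule that)
qed

text \<open>Density: pick a small parameter \<open>t > 0\<close> outside the finite exceptional set of a line.\<close>
theorem dense_M_set: "closure (M_set :: (real^'n^'n) set) = UNIV"
proof -
  have "\<exists>Y\<in>M_set. dist Y X < \<epsilon>" if "\<epsilon> > 0" for X :: "real^'n^'n" and \<epsilon>
  proof -
    obtain E where fin: "finite {t. X + t *\<^sub>R E \<notin> M_set}"
      using generic_perturbation by blast
    define \<delta> where "\<delta> = \<epsilon> / (norm E + 1)"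
    have "norm E + 1 > 0" using norm_ge_zero[of E] by linarith
    then have "\<delta> > 0" using that by (simp add: \<delta>_def)
    then have "infinite {0<..<\<delta>}" by simp
    then obtain t where t: "t \<in> {0<..<\<delta>}" "t \<notin> {t. X + t *\<^sub>R E \<notin> M_set}"
      using fin by (meson finite_subset subsetI)
    have "dist (X + t *\<^sub>R E) X = t * norm E"
      using t(1) by (simp add: dist_norm)
    also have "\<dots> \<le> t * (norm E + 1)" using t(1) by simp
    also have "\<dots> < \<epsilon>"
      using t(1) by (simp add: \<delta>_def field_simps add_pos_nonneg)
    finally show ?thesis using t(2) by blast
  qed
  then show ?thesis by (auto simp: closure_approachable)
qed

lemma meager_compl_open_dense:
  fixes A :: "'a::topological_space set"
  assumes "open A" "closure A = UNIV"
  shows "meager (UNIV - A)"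
proof -
  have "closure (UNIV - A) = UNIV - A"
    using assms(1) by (simp add: closed_Diff)
  then have "interior (closure (UNIV - A)) = {}"
    using assms(2) by (simp add: Compl_eq_Diff_UNIV[symmetric] interior_complement)
  then show ?thesis
    unfolding meager_def by (intro exI[of _ "\<lambda>_. UNIV - A"]) simp
qed

section \<open>Matrix power series\<close>

lemma powser_zero_coeffs:
  fixes d :: "nat \<Rightarrow> real"
  assumes zero: "\<And>s. (\<lambda>n. d n * s^n) sums 0"
  shows "d m = 0"
proof (induction m rule: less_induct)
  case (less m)
  have shifted: "(\<lambda>n. d (n + m) * s^n) sums 0" if "s \<noteq> 0" for s
  proof -
    have "(\<lambda>i. d (i+m) * s^(i+m)) sums 0"
      using sums_zero_iff_shift[of m "\<lambda>i. d i * s^i" 0] less zero[of s] by simp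
    then have "(\<lambda>i. d (i+m) * s^(i+m) / s^m) sums (0 / s^m)"
      by (rule sums_divide)
    moreover have "d (i+m) * s^(i+m) / s^m = d (i + m) * s^i" for i
      using that by (simp add: power_add)
    ultimately show ?thesis by simp
  qed
  have "((\<lambda>s::real. 0) \<longlongrightarrow> d (0 + m)) (at 0)"
    by (rule powser_limit_0_strong[of 1]) (use shifted in auto)
  then show "d m = 0"
    by (simp add: tendsto_const_iff)
qed

definition matrix_powser :: "(real \<Rightarrow> real^'n^'n) \<Rightarrow> (nat \<Rightarrow> real^'n^'n) \<Rightarrow> bool" where
  "matrix_powser F c \<longleftrightarrow> (\<forall>s i j. (\<lambda>n. c n $i$j * s^n) sums F s $i$j)"

lemma matrix_powser_zero:
  assumes "matrix_powser F c" "\<And>s. F s = 0"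
  shows "c n = 0"
proof -
  have "c n $i$j = 0" for i j
    using powser_zero_coeffs[of "\<lambda>n. c n $i$j" n] assms unfolding matrix_powser_def by simp
  then show ?thesis by (simp add: vec_eq_iff)
qed

lemma matrix_powser_commutator:
  assumes "matrix_powser F c"
  shows "matrix_powser (\<lambda>s. Q ** F s - F s ** Q) (\<lambda>n. Q ** c n - c n ** Q)"
  unfolding matrix_powser_def
proof (intro allI)
  fix s i j
  have "(\<lambda>n. (\<Sum>l\<in>UNIV. Q$i$l * (c n $l$j * s^n))) sums (\<Sum>l\<in>UNIV. Q$i$l * F s $l$j)"
    using assms unfolding matrix_powser_def by (intro sums_sum sums_mult) auto
  moreover have "(\<lambda>n. (\<Sum>l\<in>UNIV. (c n $i$l * s^n) * Q$l$j)) sums (\<Sum>l\<in>UNIV. F s $i$l * Q$l$j)"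
    using assms unfolding matrix_powser_def by (intro sums_sum sums_mult2) auto
  ultimately have "(\<lambda>n. (\<Sum>l\<in>UNIV. Q$i$l * (c n $l$j * s^n)) - (\<Sum>l\<in>UNIV. (c n $i$l * s^n) * Q$l$j))
     sums ((\<Sum>l\<in>UNIV. Q$i$l * F s $l$j) - (\<Sum>l\<in>UNIV. F s $i$l * Q$l$j))"
    by (rule sums_diff)
  then show "(\<lambda>n. (Q ** c n - c n ** Q)$i$j * s^n) sums (Q ** F s - F s ** Q)$i$j"
    by (simp add: matrix_matrix_mult_def right_diff_distrib sum_distrib_left mult_ac)
qed

lemma commutes_with_powser_coeffs:
  assumes "matrix_powser F c" and "\<And>s. Q ** F s = F s ** Q"
  shows "Q ** c n = c n ** Q"
  using matrix_powser_zero[OF matrix_powser_commutator[OF assms(1), of Q], of n] assms(2) by simp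

text \<open>Power series converging on the whole line converge absolutely (needed for Cauchy products).\<close>
lemma matrix_powser_abs_summable:
  assumes "matrix_powser F a"
  shows "summable (\<lambda>n. norm (a n $i$j * s^n))"
proof -
  have "(\<lambda>n. a n $i$j * (\<bar>s\<bar> + 1)^n) sums F (\<bar>s\<bar> + 1) $i$j"
    using assms unfolding matrix_powser_def by blast
  then have "summable (\<lambda>n. a n $i$j * (\<bar>s\<bar> + 1)^n)" by (rule sums_summable)
  then show ?thesis by (rule powser_insidea) simp
qed

lemma matrix_powser_mult:
  assumes A: "matrix_powser F a" and B: "matrix_powser G b"
  shows "matrix_powser (\<lambda>s. F s ** G s) (\<lambda>n. \<Sum>m\<le>n. a m ** b (n - m))"
  unfolding matrix_powser_def
proof (intro allI)
  fix s i j
  have entry: "(\<lambda>k. (\<Sum>m\<le>k. a m $i$l * b (k - m) $l$j) * s^k) sums (F s $i$l * G s $l$j)" for l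
  proof -
    have "(\<lambda>k. \<Sum>m\<le>k. (a m $i$l * s^m) * (b (k - m) $l$j * s^(k - m))) sums
        ((\<Sum>k. a k $i$l * s^k) * (\<Sum>k. b k $l$j * s^k))"
      by (rule Cauchy_product_sums[OF matrix_powser_abs_summable[OF A] matrix_powser_abs_summable[OF B]])
    moreover have "(\<Sum>k. a k $i$l * s^k) = F s $i$l" "(\<Sum>k. b k $l$j * s^k) = G s $l$j"
      using A B unfolding matrix_powser_def by (simp_all add: sums_iff)
    moreover have "(\<Sum>m\<le>k. (a m $i$l * s^m) * (b (k - m) $l$j * s^(k - m))) =
        (\<Sum>m\<le>k. a m $i$l * b (k - m) $l$j) * s^k" for k
    proof -
      have "(a m $i$l * s^m) * (b (k - m) $l$j * s^(k - m)) = (a m $i$l * b (k - m) $l$j) * s^k"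
        if "m \<le> k" for m
        using that by (simp add: mult_ac flip: power_add)
      then have "(\<Sum>m\<le>k. (a m $i$l * s^m) * (b (k - m) $l$j * s^(k - m))) =
          (\<Sum>m\<le>k. (a m $i$l * b (k - m) $l$j) * s^k)"
        by (intro sum.cong) auto
      then show ?thesis
        by (simp add: sum_distrib_right)
    qed
    ultimately show ?thesis by simp
  qed
  have "(\<lambda>k. \<Sum>l\<in>UNIV. (\<Sum>m\<le>k. a m $i$l * b (k - m) $l$j) * s^k) sums
      (\<Sum>l\<in>UNIV. F s $i$l * G s $l$j)"
    by (intro sums_sum entry)
  moreover have "(\<Sum>l\<in>UNIV. (\<Sum>m\<le>k. a m $i$l * b (k - m) $l$j) * s^k) =
      (\<Sum>m\<le>k. a m ** b (k - m))$i$j * s^k" for k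
    by (simp add: sum_component matrix_matrix_mult_def sum_distrib_right sum.swap[of _ UNIV])
  ultimately show "(\<lambda>n. (\<Sum>m\<le>n. a m ** b (n - m))$i$j * s^n) sums (F s ** G s)$i$j"
    by (simp add: matrix_matrix_mult_def)
qed

lemma mat_pow_scaleR: "mat_pow (s *\<^sub>R A) k = s^k *\<^sub>R mat_pow A k"
  by (induction k) (auto simp: vec_eq_iff matrix_matrix_mult_def sum_distrib_left mult_ac)

lemma mat_pow_entry_bound:
  fixes A :: "real^'n^'n"
  assumes a: "\<And>i j. \<bar>A$i$j\<bar> \<le> a"
  shows "\<bar>mat_pow A k $i$j\<bar> \<le> (real CARD('n) * a)^k"
proof (induction k arbitrary: i j)
  case 0
  then show ?case by (simp add: mat_def)
next
  case (Suc k)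
  have "\<bar>mat_pow A (Suc k) $i$j\<bar> \<le> (\<Sum>l\<in>UNIV. \<bar>A$i$l\<bar> * \<bar>mat_pow A k $l$j\<bar>)"
    by (simp add: matrix_matrix_mult_def sum_abs[THEN order_trans] abs_mult)
  also have "\<dots> \<le> (\<Sum>l\<in>(UNIV::'n set). a * (real CARD('n) * a)^k)"
    using a Suc.IH by (intro sum_mono mult_mono) (auto intro: order_trans[OF abs_ge_zero a])
  also have "\<dots> = (real CARD('n) * a)^(Suc k)" by simp
  finally show ?case .
qed

text \<open>The entries of the exponential series converge absolutely (comparison with \<open>exp(n a |s|)\<close>).\<close>
lemma exp_series_entry_summable:
  fixes A :: "real^'n^'n"
  shows "summable (\<lambda>k. ((1 / fact k) *\<^sub>R mat_pow A k)$i$j * s^k)"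
proof (rule summable_comparison_test')
  define a where "a = (\<Sum>i\<in>UNIV. \<Sum>j\<in>UNIV. \<bar>A$i$j\<bar>)"
  have a: "\<bar>A$i$j\<bar> \<le> a" for i j
  proof -
    have "\<bar>A$i$j\<bar> \<le> (\<Sum>j\<in>UNIV. \<bar>A$i$j\<bar>)" by (rule member_le_sum) auto
    also have "\<dots> \<le> a" unfolding a_def by (rule member_le_sum[of i]) (auto intro: sum_nonneg)
    finally show ?thesis .
  qed
  show "summable (\<lambda>k. inverse (fact k) * (real CARD('n) * a * \<bar>s\<bar>)^k)"
    by (rule summable_exp)
  fix k :: nat
  have "norm (((1 / fact k) *\<^sub>R mat_pow A k)$i$j * s^k) = inverse (fact k) * (\<bar>mat_pow A k $i$j\<bar> * \<bar>s\<bar>^k)"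
    by (simp add: abs_mult power_abs divide_inverse)
  also have "\<dots> \<le> inverse (fact k) * ((real CARD('n) * a)^k * \<bar>s\<bar>^k)"
    by (intro mult_left_mono mult_right_mono mat_pow_entry_bound a) auto
  finally show "norm (((1 / fact k) *\<^sub>R mat_pow A k)$i$j * s^k) \<le> inverse (fact k) * (real CARD('n) * a * \<bar>s\<bar>)^k"
    by (simp add: power_mult_distrib)
qed

lemma matrix_powser_exp:
  fixes A :: "real^'n^'n"
  shows "matrix_powser (\<lambda>s. mat_exp (s *\<^sub>R A)) (\<lambda>n. (1 / fact n) *\<^sub>R mat_pow A n)"
  unfolding matrix_powser_def
proof (intro allI)
  fix s :: real and i0 j0 :: 'n
  define g where "g i j k = ((1 / fact k) *\<^sub>R mat_pow A k)$i$j * s^k" for i j k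
  define L where "L = (\<chi> i j. suminf (g i j))"
  have "(\<lambda>k. (1 / fact k) *\<^sub>R mat_pow (s *\<^sub>R A) k) sums L"
    unfolding sums_def
  proof (intro vec_tendstoI)
    fix i j
    have "(\<lambda>k. ((1 / fact k) *\<^sub>R mat_pow (s *\<^sub>R A) k)$i$j) = g i j"
      by (simp add: g_def mat_pow_scaleR fun_eq_iff mult_ac)
    moreover have "g i j sums L$i$j"
      unfolding g_def L_def using summable_sums[OF exp_series_entry_summable] by simp
    ultimately have "(\<lambda>k. ((1 / fact k) *\<^sub>R mat_pow (s *\<^sub>R A) k)$i$j) sums L$i$j"
      by simp
    then show "(\<lambda>n. (\<Sum>k<n. (1 / fact k) *\<^sub>R mat_pow (s *\<^sub>R A) k)$i$j) \<longlonglongrightarrow> L$i$j"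
      by (simp add: sums_def sum_component)
  qed
  then have "mat_exp (s *\<^sub>R A) = L"
    unfolding mat_exp_def by (rule sums_unique[symmetric])
  moreover have "g i0 j0 sums L$i0$j0"
    unfolding g_def L_def using summable_sums[OF exp_series_entry_summable] by simp
  ultimately show "(\<lambda>n. ((1 / fact n) *\<^sub>R mat_pow A n)$i0$j0 * s^n) sums mat_exp (s *\<^sub>R A) $i0$j0"
    unfolding g_def by simp
qed

lemma commuting_preserves_simple_eigenvectors:
  assumes sym: "symmetric_mat S" and eB: "orth_eigenbasis S B lam" and "inj lam"
    and comm: "Q ** S = S ** Q"
  shows "Q *v B$i = (B$i \<bullet> (Q *v B$i)) *\<^sub>R B$i"
proof (rule simple_eigenvector[OF sym eB \<open>inj lam\<close>])
  have "S *v (Q *v B$i) = Q *v (S *v B$i)"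
    by (simp add: matrix_vector_mul_assoc comm)
  then show "S *v (Q *v B$i) = lam i *\<^sub>R (Q *v B$i)"
    using eB by (simp add: orth_eigenbasis_def matrix_vector_mult_scaleR)
qed

lemma diagonal_inner:
  assumes B: "orthogonal_matrix (B::real^'n^'n)" and diag: "\<And>k. Q *v B$k = \<epsilon> k *\<^sub>R B$k"
  shows "B$j \<bullet> (Q *v y) = \<epsilon> j * (B$j \<bullet> y)"
proof -
  have "Q *v y = (\<Sum>k\<in>UNIV. ((B$k \<bullet> y) * \<epsilon> k) *\<^sub>R B$k)"
    by (subst orthogonal_matrix_expansion[OF B, of y])
      (simp add: matrix_vector_mult_sum_right matrix_vector_mult_scaleR diag)
  also have "B$j \<bullet> \<dots> = (\<Sum>k\<in>UNIV. (B$k \<bullet> y) * \<epsilon> k * (B$j \<bullet> B$k))"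
    by (simp add: inner_sum_right)
  also have "\<dots> = \<epsilon> j * (B$j \<bullet> y)"
    by (simp add: orthogonal_matrix_rows_inner[OF B] if_distrib cong: if_cong)
  finally show ?thesis .
qed

lemma diagonal_commuting_coefficient:
  assumes B: "orthogonal_matrix (B::real^'n^'n)" and diag: "\<And>k. Q *v B$k = \<epsilon> k *\<^sub>R B$k"
    and comm: "Q ** C = C ** Q"
  shows "(\<epsilon> j - \<epsilon> i) * (B$j \<bullet> (C *v B$i)) = 0"
proof -
  have "\<epsilon> j * (B$j \<bullet> (C *v B$i)) = B$j \<bullet> (Q *v (C *v B$i))"
    by (rule diagonal_inner[OF B diag, symmetric])
  also have "\<dots> = B$j \<bullet> (C *v (Q *v B$i))"
    by (simp add: matrix_vector_mul_assoc comm)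
  also have "\<dots> = \<epsilon> i * (B$j \<bullet> (C *v B$i))"
    by (simp add: diag matrix_vector_mult_scaleR)
  finally show ?thesis by (simp add: algebra_simps)
qed

lemma commutator_coefficient:
  assumes sym: "symmetric_mat S" and skew: "skew_mat L" and eB: "orth_eigenbasis S B lam"
  defines "M \<equiv> S + L"
  shows "B$j \<bullet> ((M ** transpose M - transpose M ** M) *v B$i) = 2 * (lam i - lam j) * (B$j \<bullet> (L *v B$i))"
proof -
  have MT: "transpose M = S - L"
    using sym skew by (simp add: M_def transpose_add symmetric_mat_def skew_mat_def)
  have Mv: "M *v B$k = lam k *\<^sub>R B$k + L *v B$k" for k
    using eB by (simp add: M_def orth_eigenbasis_def matrix_vector_mult_add_rdistrib)
  have MTv: "transpose M *v B$k = lam k *\<^sub>R B$k - L *v B$k" for k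
    unfolding MT using eB
    by (simp add: orth_eigenbasis_def matrix_vector_mult_diff_rdistrib del: transpose_matrix_vector)
  have "transpose L *v B$i = - (L *v B$i)"
    using skew by (simp add: skew_mat_def vec_eq_iff matrix_vector_mult_def sum_negf
        del: transpose_matrix_vector)
  then have L_adj: "(L *v B$j) \<bullet> B$i = - (B$j \<bullet> (L *v B$i))"
    using inner_transpose[of "B$j" L "B$i"] by (simp add: inner_commute del: transpose_matrix_vector)
  have "B$j \<bullet> ((M ** transpose M - transpose M ** M) *v B$i)
      = (transpose M *v B$j) \<bullet> (transpose M *v B$i) - (M *v B$j) \<bullet> (M *v B$i)"
    by (simp add: matrix_vector_mult_diff_rdistrib inner_diff_right matrix_vector_mul_assoc[symmetric]
        inner_adjoint del: transpose_matrix_vector)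
  also have "\<dots> = 2 * (lam i - lam j) * (B$j \<bullet> (L *v B$i))"
    unfolding Mv MTv using L_adj
    by (simp add: inner_diff_left inner_diff_right inner_add_left inner_add_right algebra_simps)
  finally show ?thesis .
qed

text \<open>If a function on the basis indices is not constant, its level set gives an invariant
  coordinate subspace of every matrix whose coefficients vanish between different levels.\<close>
lemma constant_if_not_coord_invariant:
  assumes "\<not> coord_invariant B L"
    and vanish: "\<And>i j. \<epsilon> i \<noteq> \<epsilon> j \<Longrightarrow> B$j \<bullet> (L *v B$i) = 0"
  shows "\<epsilon> i = \<epsilon> k"
proof (rule ccontr)
  assume "\<epsilon> i \<noteq> \<epsilon> k"
  define J where "J = {m. \<epsilon> m = \<epsilon> i}"
  have "i \<in> J" "k \<notin> J" using \<open>\<epsilon> i \<noteq> \<epsilon> k\<close> by (simp_all add: J_def)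
  then have "J \<noteq> {}" "J \<noteq> UNIV" by blast+
  moreover have "\<forall>a\<in>J. \<forall>b. b \<notin> J \<longrightarrow> B$b \<bullet> (L *v B$a) = 0"
    using vanish by (simp add: J_def)
  ultimately have "coord_invariant B L"
    unfolding coord_invariant_def by blast
  then show False using assms(1) by simp
qed

lemma orthogonal_scalar_on_basis:
  assumes B: "orthogonal_matrix (B::real^'n^'n)" and "orthogonal_matrix Q"
    and scalar: "\<And>k. Q *v B$k = e *\<^sub>R B$k"
  shows "Q = mat 1 \<or> Q = - mat 1"
proof -
  have "Q *v y = e *\<^sub>R y" for y
  proof -
    have "Q *v y = Q *v (\<Sum>k\<in>UNIV. (B$k \<bullet> y) *\<^sub>R B$k)"
      by (rule arg_cong[OF orthogonal_matrix_expansion[OF B]])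
    also have "\<dots> = e *\<^sub>R (\<Sum>k\<in>UNIV. (B$k \<bullet> y) *\<^sub>R B$k)"
      by (simp add: matrix_vector_mult_sum_right matrix_vector_mult_scaleR scaleR_sum_right
          scalar mult.commute)
    also have "\<dots> = e *\<^sub>R y"
      by (simp only: orthogonal_matrix_expansion[OF B, of y, symmetric])
    finally show ?thesis .
  qed
  then have Q: "Q = e *\<^sub>R mat 1"
    by (simp add: matrix_eq scaleR_matrix_vector_assoc[symmetric])
  then have "(e * e) *\<^sub>R (mat 1 :: real^'n^'n) = mat 1"
    using \<open>orthogonal_matrix Q\<close>
    by (simp add: orthogonal_matrix_def transpose_scalar scalar_matrix_assoc[symmetric] matrix_scalar_ac)
  then have "((e * e) *\<^sub>R (mat 1 :: real^'n^'n)) $ k $ k = (mat 1 :: real^'n^'n) $ k $ k" for k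
    by simp
  then have "e * e = 1" by (simp add: mat_def)
  then have "e = 1 \<or> e = -1"
    by (simp add: square_eq_1_iff[symmetric] power2_eq_square)
  then show ?thesis using Q by auto
qed

lemma centralizer_of_M_set:
  fixes M Q :: "real^'n^'n"
  assumes "M \<in> M_set" and "orthogonal_matrix Q"
    and comm_S: "Q ** sym_part M = sym_part M ** Q"
    and comm_C: "Q ** (M ** transpose M - transpose M ** M) = (M ** transpose M - transpose M ** M) ** Q"
  shows "Q = mat 1 \<or> Q = - mat 1"
proof -
  define S L where "S = sym_part M" and "L = skew_part M"
  have sym: "symmetric_mat S" and skew: "skew_mat L"
    by (simp_all add: S_def L_def symmetric_sym_part skew_skew_part)
  have M: "M = S + L" by (simp add: S_def L_def sym_part_plus_skew_part)
  obtain B lam where eB: "orth_eigenbasis S B lam"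
    using spectral_theorem[OF sym] by blast
  then have B: "orthogonal_matrix B" by (simp add: orth_eigenbasis_def)
  have "inj lam" and not_inv: "\<not> coord_invariant B L"
    using M_set_iff[of M B lam] eB \<open>M \<in> M_set\<close> by (simp_all add: S_def L_def)
  define \<epsilon> where "\<epsilon> k = B$k \<bullet> (Q *v B$k)" for k
  have diag: "Q *v B$k = \<epsilon> k *\<^sub>R B$k" for k
    unfolding \<epsilon>_def using comm_S
    by (intro commuting_preserves_simple_eigenvectors[OF sym eB \<open>inj lam\<close>]) (simp add: S_def)
  have "B$j \<bullet> (L *v B$i) = 0" if "\<epsilon> i \<noteq> \<epsilon> j" for i j
  proof -
    have "(\<epsilon> j - \<epsilon> i) * (2 * (lam i - lam j) * (B$j \<bullet> (L *v B$i))) = 0"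
      using diagonal_commuting_coefficient[OF B diag comm_C, of j i]
        commutator_coefficient[OF sym skew eB, of j i] by (simp add: M)
    moreover have "lam i \<noteq> lam j" using that \<open>inj lam\<close> by (auto simp: inj_eq)
    ultimately show ?thesis using that by simp
  qed
  then have "\<epsilon> k = \<epsilon> k0" for k k0
    using constant_if_not_coord_invariant[OF not_inv] by blast
  then show ?thesis
    using orthogonal_scalar_on_basis[OF B \<open>orthogonal_matrix Q\<close>] diag by metis
qed

section \<open>Part (ii): the common symmetry group of the family \<open>\<Pi>\<^sub>x\<close>\<close>

text \<open>With \<open>x = e\<^sup>-\<^sup>s\<close>, \<open>\<Pi>\<^sub>x = exp(sM) exp(sM\<^sup>T)\<close> is an entire power series in \<open>s\<close> whose first two
  coefficients are \<open>M + M\<^sup>T\<close> and \<open>(M\<^sup>2 + (M\<^sup>T)\<^sup>2)/2 + MM\<^sup>T\<close>.  A matrix commuting with all \<open>\<Pi>\<^sub>x\<close>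
  therefore commutes with the symmetric part of \<open>M\<close> and with \<open>[M, M\<^sup>T]\<close>.\<close>
lemma commutes_with_Pi:
  fixes M Q :: "real^'n^'n"
  assumes comm: "\<And>x. x > 0 \<Longrightarrow> Q ** (mat_rpow_neg x M ** mat_rpow_neg x (transpose M)) =
                                 (mat_rpow_neg x M ** mat_rpow_neg x (transpose M)) ** Q"
  shows "Q ** sym_part M = sym_part M ** Q"
    and "Q ** (M ** transpose M - transpose M ** M) = (M ** transpose M - transpose M ** M) ** Q"
proof -
  define p where "p n = (\<Sum>m\<le>n. ((1 / fact m) *\<^sub>R mat_pow M m) **
      ((1 / fact (n - m)) *\<^sub>R mat_pow (transpose M) (n - m)))" for n
  have "matrix_powser (\<lambda>s. mat_exp (s *\<^sub>R M) ** mat_exp (s *\<^sub>R transpose M)) p"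
    unfolding p_def by (rule matrix_powser_mult[OF matrix_powser_exp matrix_powser_exp])
  moreover have "Q ** (mat_exp (s *\<^sub>R M) ** mat_exp (s *\<^sub>R transpose M)) =
      (mat_exp (s *\<^sub>R M) ** mat_exp (s *\<^sub>R transpose M)) ** Q" for s
    using comm[of "exp (- s)"] by (simp add: mat_rpow_neg_def)
  ultimately have cp: "Q ** p n = p n ** Q" for n
    by (rule commutes_with_powser_coeffs)
  have p1: "p 1 = M + transpose M"
    by (simp add: p_def)
  have p2: "p 2 = (1/2) *\<^sub>R (transpose M ** transpose M) + M ** transpose M + (1/2) *\<^sub>R (M ** M)"
    by (simp add: p_def numeral_2_eq_2 scalar_matrix_assoc[symmetric] matrix_scalar_ac)
  have "sym_part M = (1/2) *\<^sub>R p 1"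
    unfolding p1 sym_part_def ..
  then show "Q ** sym_part M = sym_part M ** Q"
    using cp[of 1] by (simp add: matrix_scalar_ac scalar_matrix_assoc[symmetric])
  have "M ** transpose M - transpose M ** M = 2 *\<^sub>R p 2 - p 1 ** p 1"
    unfolding p1 p2
    by (simp add: matrix_add_ldistrib matrix_add_rdistrib scaleR_add_right algebra_simps)
      (simp add: vec_eq_iff)
  moreover have "Q ** (p 1 ** p 1) = (p 1 ** p 1) ** Q"
    using cp[of 1] by (metis matrix_mul_assoc)
  ultimately show "Q ** (M ** transpose M - transpose M ** M) = (M ** transpose M - transpose M ** M) ** Q"
    using cp[of 2]
    by (simp add: matrix_diff_ldistrib matrix_diff_rdistrib matrix_scalar_ac scalar_matrix_assoc[symmetric])
qed

theorem symmetry_group_of_M_set: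
  fixes M :: "real^'n^'n"
  assumes "M \<in> M_set"
  shows "(\<Inter>x \<in> {0<..}. G_set (mat_rpow_neg x M ** mat_rpow_neg x (transpose M))) = {mat 1, - mat 1}"
proof (intro set_eqI iffI)
  fix Q assume Q: "Q \<in> (\<Inter>x \<in> {0<..}. G_set (mat_rpow_neg x M ** mat_rpow_neg x (transpose M)))"
  then have "Q \<in> G_set (mat_rpow_neg 1 M ** mat_rpow_neg 1 (transpose M))" by simp
  then have "orthogonal_matrix Q" by (simp add: G_set_def)
  have comm: "\<And>x. x > 0 \<Longrightarrow> Q ** (mat_rpow_neg x M ** mat_rpow_neg x (transpose M)) =
                               (mat_rpow_neg x M ** mat_rpow_neg x (transpose M)) ** Q"
    using Q by (auto simp: G_set_def)
  have "Q ** sym_part M = sym_part M ** Q"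
    by (rule commutes_with_Pi(1)) (rule comm)
  moreover have "Q ** (M ** transpose M - transpose M ** M) = (M ** transpose M - transpose M ** M) ** Q"
    by (rule commutes_with_Pi(2)) (rule comm)
  ultimately show "Q \<in> {mat 1, - mat 1}"
    using centralizer_of_M_set[OF assms \<open>orthogonal_matrix Q\<close>] by blast
next
  fix Q :: "real^'n^'n" assume "Q \<in> {mat 1, - mat 1}"
  show "Q \<in> (\<Inter>x \<in> {0<..}. G_set (mat_rpow_neg x M ** mat_rpow_neg x (transpose M)))"
  proof -
    have neg: "(- A) ** B = - (A ** B)" "B ** (- A) = - (B ** A)" "transpose (- A) = - transpose A"
      for A B :: "real^'n^'n"
      by (simp_all add: vec_eq_iff matrix_matrix_mult_def transpose_def sum_negf)
    have "orthogonal_matrix Q" and "Q ** P = P ** Q" for P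
      using \<open>Q \<in> {mat 1, - mat 1}\<close> by (auto simp: orthogonal_matrix_def neg)
    then show ?thesis by (simp add: G_set_def)
  qed
qed

text \<open>The main result; the argument does not need the dimension bound \<open>n \<ge> 2\<close>.\<close>
theorem proposition5p2:
  assumes "CARD('n::finite) \<ge> 2"
  shows "open (M_set :: (real^'n^'n) set)
       \<and> closure (M_set :: (real^'n^'n) set) = UNIV
       \<and> meager (UNIV - (M_set :: (real^'n^'n) set))
       \<and> (\<forall>M \<in> (M_set :: (real^'n^'n) set).
            (\<Inter>x \<in> {0<..}. G_set (mat_rpow_neg x M ** mat_rpow_neg x (transpose M)))
              = {mat 1, - mat 1})"
  by (intro conjI ballI open_M_set dense_M_set meager_compl_open_dense symmetry_group_of_M_set)

end
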